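(* Fix $m\in\{1,\dots,M\}$, let $n=N_r-M+1$, let $R_{m,1},\dots,R_{m,K}>0$ and let $\phi_{m,1},\dots,\phi_{m,K}>0$ be the constants defined in the context. Let $\zeta_{m,k}^*$ and $\theta_{m,k}^*$ be the optimal solution of \[ \min\ \sum_{m=1}^M\sum_{k=1}^K \phi_{m,k}R_{m,k}\,\theta_{m,k}^{-n} \] subject to $\sum_{k=1}^K\zeta_{m,k}=\frac1M$ for all $m$; $\zeta_{m,k}>0$, $\theta_{m,k}>0$; and $\theta_{m,k}\le \frac{\zeta_{m,i}}{2^{R_{m,i}}-1}-\sum_{l=1}^{i-1}\zeta_{m,l}$ for all $m$, $k$ and $i\in\{k,\dots,K\}$. Then $\theta_{m,1}^*<\theta_{m,2}^*<\dots<\theta_{m,K}^*$, and consequently \[ \frac{\zeta_{m,1}^*}{2^{R_{m,1}}-1}<\frac{\zeta_{m,2}^*}{2^{R_{m,2}}-1}<\dots<\frac{\zeta_{m,K}^*}{2^{R_{m,K}}-1}. \]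
   Context: Setting: a base station with $N_t$ antennas serves $K$ clusters, each of $N_r$ single-antenna devices, each requesting $M\le\min(N_t,N_r)$ streams. $\mathbf R_t$, $\mathbf R_r$ are Hermitian positive definite correlation matrices, $\lambda_1,\dots,\lambda_{N_r}$ the eigenvalues of $\mathbf R_r$; $\mathbf V\in\mathbb C^{N_t\times M}$ with unit-norm columns, $\mathbf R_{t'}=\mathbf V^{\mathrm H}\mathbf R_t\mathbf V$ (invertible); $\bar\gamma>0$; path loss $\mathcal K d_k^{-\alpha}$ with $d_1\le\dots\le d_K$. With $W=(\lambda_i^{N_r-j})_{i,j}$ and $D$ equal to $W$ with first column replaced by $(\lambda_i^{M-2}\ln\lambda_i)_i$, $\phi_{m,k}=\frac{1}{N_r!\det\mathbf R_r}\big(\frac{[\mathbf R_{t'}^{-1}]_{mm}}{\bar\gamma\mathcal K d_k^{-\alpha}}\big)^{N_r}$ if $M=1$, and $\phi_{m,k}=\frac{(-1)^{N_r-M}(N_r-1)!\det D}{(N_r-M)!(N_r-M+1)!(M-2)!\det W}\big(\frac{[\mathbf R_{t'}^{-1}]_{mm}}{\bar\gamma\mathcal K d_k^{-\alpha}}\big)^{N_r-M+1}$ if $M>1$. (The optimal solution is given explicitly by $\boldsymbol\zeta_m^*=\mathbf L_m^{-1}\mathbf b_m/(M\mathbf 1_K^{\mathrm T}\mathbf L_m^{-1}\mathbf b_m)$, with $\mathbf L_m^{\mathrm T}=\mathbf U_m$ upper triangular, diagonal $1/(2^{R_{m,k}}-1)$, entries $-1$ above the diagonal, and $[\mathbf b_m]_k=\big(n\phi_{m,k}R_{m,k}/(\mathbf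 e_k^{\mathrm T}\mathbf U_m^{-1}\mathbf 1_K)\big)^{1/(n+1)}$.) *)

theory Defs
  imports "Jordan_Normal_Form.Schur_Decomposition"
begin

definition hpd_mat :: "complex mat \<Rightarrow> nat \<Rightarrow> bool" where
  "hpd_mat A n \<longleftrightarrow> A \<in> carrier_mat n n \<and> mat_adjoint A = A \<and>
     (\<forall>v \<in> carrier_vec n. v \<noteq> 0\<^sub>v n \<longrightarrow> Re ((A *\<^sub>v v) \<bullet>c v) > 0)"

definition mat_inv :: "complex mat \<Rightarrow> complex mat" where
  "mat_inv A = (THE B. B \<in> carrier_mat (dim_row A) (dim_row A) \<and> inverts_mat A B \<and> inverts_mat B A)"

text \<open>The matrix W = (lambda_i^(Nr-j))_{i,j}, indices 1..Nr stored 0-based.\<close>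
definition W_mat :: "nat \<Rightarrow> (nat \<Rightarrow> real) \<Rightarrow> real mat" where
  "W_mat Nr lam = mat Nr Nr (\<lambda>(i, j). lam (i + 1) ^ (Nr - (j + 1)))"

definition D_mat :: "nat \<Rightarrow> nat \<Rightarrow> (nat \<Rightarrow> real) \<Rightarrow> real mat" where
  "D_mat Nr M lam = mat Nr Nr (\<lambda>(i, j). if j = 0 then lam (i + 1) ^ (M - 2) * ln (lam (i + 1))
                                        else lam (i + 1) ^ (Nr - (j + 1)))"

text \<open>The constant phi_{m,k}: q = [R_{t'}^{-1}]_{mm}, detRr = det R_r,
  gam = bar gamma, Kc = path-loss constant, alpha = path-loss exponent, d = d_k.\<close>
definition phi_const :: "nat \<Rightarrow> nat \<Rightarrow> (nat \<Rightarrow> real) \<Rightarrow> real \<Rightarrow> real \<Rightarrow> real \<Rightarrow> real \<Rightarrow> real \<Rightarrow> real \<Rightarrow> real" where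
  "phi_const Nr M lam detRr q gam Kc alpha d =
     (let x = q / (gam * Kc * d powr (- alpha)) in
      if M = 1 then 1 / (fact Nr * detRr) * x ^ Nr
      else (-1) ^ (Nr - M) * fact (Nr - 1) * det (D_mat Nr M lam)
           / (fact (Nr - M) * fact (Nr - M + 1) * fact (M - 2) * det (W_mat Nr lam))
           * x ^ (Nr - M + 1))"

definition feasible :: "nat \<Rightarrow> nat \<Rightarrow> (nat \<Rightarrow> nat \<Rightarrow> real) \<Rightarrow> (nat \<Rightarrow> nat \<Rightarrow> real) \<Rightarrow> (nat \<Rightarrow> nat \<Rightarrow> real) \<Rightarrow> bool" where
  "feasible M K R zeta theta \<longleftrightarrow>
     (\<forall>m \<in> {1..M}. (\<Sum>k = 1..K. zeta m k) = 1 / real M) \<and>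
     (\<forall>m \<in> {1..M}. \<forall>k \<in> {1..K}. zeta m k > 0 \<and> theta m k > 0) \<and>
     (\<forall>m \<in> {1..M}. \<forall>k \<in> {1..K}. \<forall>i \<in> {k..K}.
        theta m k \<le> zeta m i / (2 powr R m i - 1) - (\<Sum>l = 1..i - 1. zeta m l))"

definition objective :: "nat \<Rightarrow> nat \<Rightarrow> nat \<Rightarrow> (nat \<Rightarrow> nat \<Rightarrow> real) \<Rightarrow> (nat \<Rightarrow> nat \<Rightarrow> real) \<Rightarrow> (nat \<Rightarrow> nat \<Rightarrow> real) \<Rightarrow> real" where
  "objective n M K phi R theta = (\<Sum>m = 1..M. \<Sum>k = 1..K. phi m k * R m k * inverse (theta m k ^ n))"

definition optimal :: "nat \<Rightarrow> nat \<Rightarrow> nat \<Rightarrow> (nat \<Rightarrow> nat \<Rightarrow> real) \<Rightarrow> (nat \<Rightarrow> nat \<Rightarrow> real) \<Rightarrow> (nat \<Rightarrow> nat \<Rightarrow> real) \<Rightarrow> (nat \<Rightarrow> nat \<Rightarrow> real) \<Rightarrow> bool" where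
  "optimal n M K phi R zeta theta \<longleftrightarrow> feasible M K R zeta theta \<and>
     (\<forall>zeta' theta'. feasible M K R zeta' theta' \<longrightarrow>
        objective n M K phi R theta \<le> objective n M K phi R theta')"

end

theory Submission
  imports Defs
begin

(* Fix a cluster m and write c_i = 2^{R_{m,i}} - 1 and w_i = phi_{m,i} R_{m,i}. The clusters are
   coupled neither in the constraints nor in the cost, so the row (zeta_m, theta_m) of an optimum
   is optimal for its own cluster.

   For nondecreasing rates t the SIC constraints can be met with total power exactly
   T(t) = sum_i a_i t_i, a_i = c_i prod_{j>i} (1 + c_j), and every feasible allocation spends at
   least T(t), its surplus bounding each SIC slack. Hence at an optimum theta is nondecreasing
   (otherwise raise the smaller rate), exhausts the budget 1/M (otherwise scale it up) and meets
   every constraint theta_i <= zeta_i / c_i - sum_{l<i} zeta_l with equality.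

   If two consecutive rates coincided, lowering the first and raising the last rate of the constant
   block at fixed T would decrease the cost to first order, since w_i / a_i increases strictly:
   phi_{m,i} is a positive multiple of d_i^(alpha n), hence nondecreasing, and
   ln (1 + c) < c < (1 + c) ln (1 + c). The tight constraints
   zeta_i / c_i = theta_i + sum_{l<i} zeta_l then order the zeta_i / c_i as well. The matrix
   hypotheses enter only through the form of phi. *)

lemma sum_fun_upd_diff:
  fixes g :: "'a \<Rightarrow> 'b \<Rightarrow> real"
  assumes "finite A" "k \<in> A"
  shows "(\<Sum>i \<in> A. g i ((f(k := v)) i)) = (\<Sum>i \<in> A. g i (f i)) + (g k v - g k (f k))"
proof -
  have "(\<Sum>i \<in> A. g i ((f(k := v)) i)) = g k v + (\<Sum>i \<in> A - {k}. g i (f i))"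
    using assms by (simp add: sum.remove)
  moreover have "(\<Sum>i \<in> A. g i (f i)) = g k (f k) + (\<Sum>i \<in> A - {k}. g i (f i))"
    using assms by (rule sum.remove)
  ultimately show ?thesis by simp
qed

lemma ln_one_plus_mult_less:
  fixes a b :: real
  assumes "0 < a" "0 < b"
  shows "ln (1 + a) * b < a * (1 + b) * ln (1 + b)"
proof -
  have "ln (1 + a) * b < a * b"
    using assms ln_add_one_self_less_self[of a] by simp
  also have "b < (1 + b) * ln (1 + b)"
    using assms ln_add1_gt[of b] by (simp add: field_simps add.commute)
  then have "a * b < a * ((1 + b) * ln (1 + b))"
    using assms by simp
  finally show ?thesis by (simp add: mult.assoc)
qed

lemma weight_step_less:
  fixes p1 p2 R1 R2 :: real
  assumes "0 < p1" "p1 \<le> p2" "0 < R1" "0 < R2"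
  shows "p1 * R1 * (2 powr R2 - 1) < p2 * R2 * (2 powr R1 - 1) * (1 + (2 powr R2 - 1))"
proof -
  have "0 < 2 powr R2 - 1"
    using assms by simp
  then have "p1 * R1 * (2 powr R2 - 1) \<le> p2 * (R1 * (2 powr R2 - 1))"
    using assms by (simp add: mult_right_mono)
  also have "R1 * (2 powr R2 - 1) < R2 * (2 powr R1 - 1) * (1 + (2 powr R2 - 1))"
    using ln_one_plus_mult_less[of "2 powr R1 - 1" "2 powr R2 - 1"] assms
    by (simp add: ln_powr mult.commute mult.left_commute)
  then have "p2 * (R1 * (2 powr R2 - 1)) < p2 * (R2 * (2 powr R1 - 1) * (1 + (2 powr R2 - 1)))"
    using assms by simp
  finally show ?thesis
    by (simp add: mult.assoc)
qed

lemma two_point_descent: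
  fixes t0 lo hi p q a b :: real
  assumes n: "1 \<le> n" and lo: "0 \<le> lo" "lo < t0" and hi: "t0 < hi" and pq: "p * b < q * a"
  obtains h where "0 < h" "lo < t0 - b * h" "t0 + a * h < hi"
    "p * inverse ((t0 - b * h) ^ n) + q * inverse ((t0 + a * h) ^ n) < (p + q) * inverse (t0 ^ n)"
proof -
  define f where "f h = p * inverse ((t0 - b * h) ^ n) + q * inverse ((t0 + a * h) ^ n)" for h
  define f' where "f' = real n * t0 ^ (n - 1) * inverse (t0 ^ n) ^ 2 * (p * b - q * a)"
  have "(f has_real_derivative f') (at 0)"
    unfolding f_def f'_def using lo
    by (auto intro!: derivative_eq_intros simp: power2_eq_square algebra_simps)
  moreover have "f' < 0"
    using n lo pq unfolding f'_def by (simp add: mult_pos_neg)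
  ultimately obtain d where "0 < d" "\<forall>h > 0. h < d \<longrightarrow> f (0 + h) < f 0"
    using DERIV_neg_dec_right by blast
  then have "\<forall>\<^sub>F h in at_right 0. f h < f 0"
    unfolding eventually_at_right_field by auto
  moreover have "((\<lambda>h. t0 - b * h) \<longlongrightarrow> t0) (at_right 0)" "((\<lambda>h. t0 + a * h) \<longlongrightarrow> t0) (at_right 0)"
    by (auto intro!: tendsto_eq_intros)
  then have "\<forall>\<^sub>F h in at_right 0. lo < t0 - b * h" "\<forall>\<^sub>F h in at_right 0. t0 + a * h < hi"
    using lo hi by (auto dest: order_tendstoD)
  moreover note eventually_at_right_less[of "0 :: real"]
  ultimately have "\<forall>\<^sub>F h in at_right 0. f h < f 0 \<and> lo < t0 - b * h \<and> t0 + a * h < hi \<and> 0 < h"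
    by eventually_elim blast
  then obtain h where "f h < f 0" "lo < t0 - b * h" "t0 + a * h < hi" "0 < h"
    using eventually_happens'[of "at_right (0 :: real)"] by force
  then show ?thesis
    using that unfolding f_def by (simp add: distrib_right)
qed

lemma maximal_constant_block:
  fixes f :: "nat \<Rightarrow> 'a :: linorder"
  assumes mono: "\<And>i. i \<in> {1..<K} \<Longrightarrow> f i \<le> f (Suc i)"
    and k: "k \<in> {1..<K}" and eq: "f (Suc k) = f k"
  obtains j l where "1 \<le> j" "j \<le> k" "Suc k \<le> l" "l \<le> K" "\<And>i. i \<in> {j..l} \<Longrightarrow> f i = f k"
    "1 < j \<Longrightarrow> f (j - 1) < f k" "l < K \<Longrightarrow> f k < f (Suc l)"
proof -
  have le: "f i \<le> f i'" if "1 \<le> i" "i \<le> i'" "i' \<le> K" for i i'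
    using that by (intro lift_Suc_mono_le_ivl[where N = "{1..<K}" and f = f, OF mono]) auto
  define J where "J = {i \<in> {1..k}. f i = f k}"
  define L where "L = {i \<in> {Suc k..K}. f i = f k}"
  define j where "j = Min J"
  define l where "l = Max L"
  have "k \<in> J" "Suc k \<in> L" "finite J" "finite L"
    using k eq by (auto simp: J_def L_def)
  then have "j \<in> J" "l \<in> L"
    and j_min: "\<And>i. i \<in> J \<Longrightarrow> j \<le> i" and l_max: "\<And>i. i \<in> L \<Longrightarrow> i \<le> l"
    unfolding j_def l_def by (auto intro: Min_in Max_in)
  then have jl: "1 \<le> j" "j \<le> k" "Suc k \<le> l" "l \<le> K" "f j = f k" "f l = f k"
    by (auto simp: J_def L_def)
  show ?thesis
  proof
    show "f i = f k" if "i \<in> {j..l}" for i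
      using that jl le[of j i] le[of i l] by auto
    show "f (j - 1) < f k" if "1 < j"
      using that jl le[of "j - 1" j] j_min[of "j - 1"]
      by (force simp: J_def)
    show "f k < f (Suc l)" if "l < K"
      using that jl le[of l "Suc l"] l_max[of "Suc l"]
      by (force simp: L_def)
  qed (use jl in auto)
qed

section \<open>The power budget of a rate profile\<close>

definition sic_margin :: "(nat \<Rightarrow> real) \<Rightarrow> (nat \<Rightarrow> real) \<Rightarrow> nat \<Rightarrow> real" where
  "sic_margin c z i = z i / c i - (\<Sum>l = 1..i - 1. z l)"

definition row_feasible ::
    "nat \<Rightarrow> real \<Rightarrow> (nat \<Rightarrow> real) \<Rightarrow> (nat \<Rightarrow> real) \<Rightarrow> (nat \<Rightarrow> real) \<Rightarrow> bool" where
  "row_feasible K s c z t \<longleftrightarrow> (\<Sum>k = 1..K. z k) = s \<and> (\<forall>k \<in> {1..K}. 0 < z k \<and> 0 < t k) \<and>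
     (\<forall>k \<in> {1..K}. \<forall>i \<in> {k..K}. t k \<le> sic_margin c z i)"

definition growth_factor :: "(nat \<Rightarrow> real) \<Rightarrow> nat \<Rightarrow> nat \<Rightarrow> real" where
  "growth_factor c i k = (\<Prod>j = Suc i..k. 1 + c j)"

definition budget_coeff :: "(nat \<Rightarrow> real) \<Rightarrow> nat \<Rightarrow> nat \<Rightarrow> real" where
  "budget_coeff c k i = c i * growth_factor c i k"

(* With all SIC constraints tight, z_k = c_k (t_k + sum_{l<k} z_l); unrolling this recursion gives
   the total power needed to support the rates t of users 1..k. *)
definition required_budget :: "(nat \<Rightarrow> real) \<Rightarrow> (nat \<Rightarrow> real) \<Rightarrow> nat \<Rightarrow> real" where
  "required_budget c t k = (\<Sum>i = 1..k. budget_coeff c k i * t i)"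

lemma growth_factor_self [simp]: "growth_factor c k k = 1"
  unfolding growth_factor_def by simp

lemma growth_factor_Suc: "i \<le> k \<Longrightarrow> growth_factor c i (Suc k) = growth_factor c i k * (1 + c (Suc k))"
  unfolding growth_factor_def by (simp add: prod.cl_ivl_Suc)

lemma growth_factor_Suc_left: "Suc i \<le> k \<Longrightarrow> growth_factor c i k = (1 + c (Suc i)) * growth_factor c (Suc i) k"
  unfolding growth_factor_def by (simp add: prod.atLeast_Suc_atMost)

lemma growth_factor_pos: "(\<And>j. j \<in> {Suc i..k} \<Longrightarrow> 0 \<le> c j) \<Longrightarrow> 0 < growth_factor c i k"
  unfolding growth_factor_def by (intro prod_pos) (simp add: add_pos_nonneg)

lemma required_budget_0 [simp]: "required_budget c t 0 = 0"
  unfolding required_budget_def by simp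

lemma required_budget_Suc:
  "required_budget c t (Suc k) = (1 + c (Suc k)) * required_budget c t k + c (Suc k) * t (Suc k)"
proof -
  have "(\<Sum>i = 1..k. budget_coeff c (Suc k) i * t i) = (1 + c (Suc k)) * required_budget c t k"
    unfolding required_budget_def sum_distrib_left
    by (rule sum.cong) (auto simp: budget_coeff_def growth_factor_Suc)
  then show ?thesis
    unfolding required_budget_def by (simp add: sum.cl_ivl_Suc budget_coeff_def)
qed

lemma required_budget_nonneg:
  assumes "\<And>i. i \<in> {1..k} \<Longrightarrow> 0 \<le> c i" "\<And>i. i \<in> {1..k} \<Longrightarrow> 0 \<le> t i"
  shows "0 \<le> required_budget c t k"
  using assms by (induction k) (simp_all add: required_budget_Suc)

lemma budget_coeff_pos:
  assumes "\<And>j. j \<in> {i..k} \<Longrightarrow> 0 < c j" "i \<le> k"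
  shows "0 < budget_coeff c k i"
proof -
  have "0 < growth_factor c i k"
    using assms by (intro growth_factor_pos) (auto intro: less_imp_le)
  then show ?thesis
    using assms by (simp add: budget_coeff_def)
qed

lemma required_budget_pos:
  assumes "1 \<le> k" "\<And>i. i \<in> {1..k} \<Longrightarrow> 0 < c i" "\<And>i. i \<in> {1..k} \<Longrightarrow> 0 < t i"
  shows "0 < required_budget c t k"
proof -
  obtain k' where k': "k = Suc k'" using assms(1) by (cases k) auto
  have "0 \<le> required_budget c t k'"
    using assms k' by (intro required_budget_nonneg) (auto intro: less_imp_le)
  then have "0 \<le> (1 + c k) * required_budget c t k'"
    using assms(2)[of k] k' by simp
  moreover have "0 < c k * t k" using assms k' by simp
  ultimately show ?thesis
    using k' by (simp add: required_budget_Suc)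
qed

lemma required_budget_scale: "required_budget c (\<lambda>i. a * t i) k = a * required_budget c t k"
  unfolding required_budget_def sum_distrib_left by (rule sum.cong) auto

lemma required_budget_fun_upd:
  "j \<in> {1..k} \<Longrightarrow>
    required_budget c (t(j := v)) k = required_budget c t k + budget_coeff c k j * (v - t j)"
  unfolding required_budget_def
  using sum_fun_upd_diff[of "{1..k}" j "\<lambda>i x. budget_coeff c k i * x" t v]
  by (simp add: right_diff_distrib)

lemma required_budget_gap:
  assumes c: "\<And>i. i \<in> {1..k} \<Longrightarrow> 0 < c i"
    and t: "\<And>i. i \<in> {1..k} \<Longrightarrow> t i \<le> sic_margin c z i"
  shows "0 \<le> (\<Sum>l = 1..k. z l) - required_budget c t k \<and>
    (\<forall>i \<in> {1..k}. c i * (sic_margin c z i - t i) \<le> (\<Sum>l = 1..k. z l) - required_budget c t k)"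
  using assms
proof (induction k)
  case 0
  then show ?case by simp
next
  case (Suc k)
  define D where "D = (\<Sum>l = 1..k. z l) - required_budget c t k"
  define e where "e = c (Suc k) * (sic_margin c z (Suc k) - t (Suc k))"
  have IH: "0 \<le> D" "\<forall>i \<in> {1..k}. c i * (sic_margin c z i - t i) \<le> D"
    using Suc by (simp_all add: D_def)
  have c1: "0 < c (Suc k)" and e: "0 \<le> e"
    using Suc.prems(1,2)[of "Suc k"] by (simp_all add: e_def)
  have step: "(\<Sum>l = 1..Suc k. z l) - required_budget c t (Suc k) = D + c (Suc k) * D + e"
    using c1 by (simp add: D_def e_def sic_margin_def required_budget_Suc sum.cl_ivl_Suc field_simps)
  have cD: "0 \<le> c (Suc k) * D" using c1 IH by simp
  have "c i * (sic_margin c z i - t i) \<le> D + c (Suc k) * D + e" if "i \<in> {1..Suc k}" for i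
  proof (cases "i = Suc k")
    case True
    then show ?thesis using IH(1) cD by (simp add: e_def)
  next
    case False
    then show ?thesis using that IH cD e by force
  qed
  then show ?case
    using IH(1) cD e unfolding step by simp
qed

lemma ex_row_feasible_of_budget:
  assumes K: "1 \<le> K" and c: "\<And>i. i \<in> {1..K} \<Longrightarrow> 0 < c i"
    and t: "\<And>i. i \<in> {1..K} \<Longrightarrow> 0 < t i"
    and mono: "\<And>i. i \<in> {1..<K} \<Longrightarrow> t i \<le> t (Suc i)"
    and budget: "required_budget c t K \<le> s"
  shows "\<exists>z. row_feasible K s c z t"
proof -
  \<comment> \<open>the tight allocation, with the surplus given to the last user\<close>
  define z where
    "z i = c i * (t i + required_budget c t (i - 1)) + (if i = K then s - required_budget c t K else 0)"
    for i
  have partial: "(\<Sum>l = 1..k. z l) = required_budget c t k" if "k < K" for k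
    using that
  proof (induction k)
    case (Suc k)
    then have "z (Suc k) = c (Suc k) * (t (Suc k) + required_budget c t k)"
      by (simp add: z_def)
    with Suc show ?case
      by (simp add: sum.cl_ivl_Suc required_budget_Suc algebra_simps)
  qed simp
  have margin: "sic_margin c z i = t i + (if i = K then s - required_budget c t K else 0) / c i"
    if "i \<in> {1..K}" for i
  proof -
    have "sic_margin c z i = z i / c i - required_budget c t (i - 1)"
      using that partial[of "i - 1"] by (auto simp: sic_margin_def)
    then show ?thesis
      using c[OF that] by (simp add: z_def field_simps)
  qed
  obtain K' where K': "K = Suc K'" using K by (cases K) auto
  have "(\<Sum>k = 1..K. z k) = s"
    using partial[of K'] K' by (simp add: sum.cl_ivl_Suc z_def required_budget_Suc algebra_simps)
  moreover have "0 < z i" if "i \<in> {1..K}" for i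
  proof -
    have "0 \<le> required_budget c t (i - 1)"
      using that c t by (intro required_budget_nonneg) (auto intro: less_imp_le)
    then show ?thesis
      using that c[OF that] t[OF that] budget by (simp add: z_def add_pos_nonneg)
  qed
  moreover have "t k \<le> sic_margin c z i" if "k \<in> {1..K}" "i \<in> {k..K}" for k i
  proof -
    have "t k \<le> t i"
      using that by (intro lift_Suc_mono_le_ivl[where N = "{1..<K}" and f = t, OF mono]) auto
    also have "t i \<le> sic_margin c z i"
      using that budget c[of i] by (simp add: margin)
    finally show ?thesis .
  qed
  ultimately show ?thesis
    unfolding row_feasible_def using t by blast
qed

lemma weight_budget_ratio_less:
  assumes c: "\<And>i. i \<in> {1..K} \<Longrightarrow> 0 < c i"
    and weight: "\<And>i. i \<in> {1..<K} \<Longrightarrow> w i * c (Suc i) < w (Suc i) * c i * (1 + c (Suc i))"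
    and jl: "1 \<le> j" "j < l" "l \<le> K"
  shows "w j * budget_coeff c K l < w l * budget_coeff c K j"
proof -
  let ?a = "budget_coeff c K"
  have a_pos: "0 < ?a i" if "i \<in> {1..K}" for i
    using that c by (intro budget_coeff_pos) auto
  have ratio_step: "w i / ?a i < w (Suc i) / ?a (Suc i)" if i: "i \<in> {1..<K}" for i
  proof -
    have "0 < growth_factor c (Suc i) K"
      using i c by (intro growth_factor_pos) (auto intro: less_imp_le)
    then have "w i * c (Suc i) * growth_factor c (Suc i) K
        < w (Suc i) * c i * (1 + c (Suc i)) * growth_factor c (Suc i) K"
      using weight[OF i] by simp
    also have "\<dots> = w (Suc i) * ?a i"
      using i by (simp add: budget_coeff_def growth_factor_Suc_left[of i K])
    finally have "w i * ?a (Suc i) < w (Suc i) * ?a i"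
      by (simp add: budget_coeff_def mult.assoc)
    then show ?thesis
      using i a_pos[of i] a_pos[of "Suc i"] by (simp add: divide_less_eq less_divide_eq mult_ac)
  qed
  have "w j / ?a j < w l / ?a l"
    using jl by (intro lift_Suc_mono_less_ivl[where N = "{1..<K}" and f = "\<lambda>i. w i / ?a i", OF ratio_step]) auto
  then show ?thesis
    using jl a_pos[of j] a_pos[of l] by (simp add: divide_less_eq less_divide_eq mult_ac)
qed

section \<open>Optimal rate profiles of one cluster\<close>

definition row_cost :: "nat \<Rightarrow> nat \<Rightarrow> (nat \<Rightarrow> real) \<Rightarrow> (nat \<Rightarrow> real) \<Rightarrow> real" where
  "row_cost n K w t = (\<Sum>k = 1..K. w k * inverse (t k ^ n))"

lemma row_cost_fun_upd:
  "k \<in> {1..K} \<Longrightarrow>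
    row_cost n K w (t(k := v)) = row_cost n K w t + w k * (inverse (v ^ n) - inverse (t k ^ n))"
  unfolding row_cost_def
  using sum_fun_upd_diff[of "{1..K}" k "\<lambda>i x. w i * inverse (x ^ n)" t v]
  by (simp add: right_diff_distrib)

(* One cluster m of the problem: c_i = 2^{R_{m,i}} - 1, w_i = phi_{m,i} R_{m,i} and s = 1/M. *)
locale row_optimum =
  fixes n K :: nat and s :: real and c w z \<theta> :: "nat \<Rightarrow> real"
  assumes n_pos: "1 \<le> n" and K_pos: "1 \<le> K"
    and c_pos: "\<And>i. i \<in> {1..K} \<Longrightarrow> 0 < c i"
    and w_pos: "\<And>i. i \<in> {1..K} \<Longrightarrow> 0 < w i"
    and feasible: "row_feasible K s c z \<theta>"
    and minimal: "\<And>z' t. row_feasible K s c z' t \<Longrightarrow> row_cost n K w \<theta> \<le> row_cost n K w t"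
begin

lemma sum_z: "(\<Sum>k = 1..K. z k) = s"
  and z_pos: "i \<in> {1..K} \<Longrightarrow> 0 < z i"
  and theta_pos: "i \<in> {1..K} \<Longrightarrow> 0 < \<theta> i"
  and theta_le_margin: "k \<in> {1..K} \<Longrightarrow> i \<in> {k..K} \<Longrightarrow> \<theta> k \<le> sic_margin c z i"
  using feasible unfolding row_feasible_def by blast+

lemma row_cost_pos: "0 < row_cost n K w \<theta>"
  unfolding row_cost_def using K_pos w_pos theta_pos by (intro sum_pos) auto

lemma row_cost_le_of_budget:
  assumes "\<And>i. i \<in> {1..K} \<Longrightarrow> 0 < t i" "\<And>i. i \<in> {1..<K} \<Longrightarrow> t i \<le> t (Suc i)"
    and "required_budget c t K \<le> s"
  shows "row_cost n K w \<theta> \<le> row_cost n K w t"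
  using ex_row_feasible_of_budget[OF K_pos c_pos assms] minimal by blast

lemma theta_mono:
  assumes k: "k \<in> {1..<K}"
  shows "\<theta> k \<le> \<theta> (Suc k)"
proof (rule ccontr)
  assume "\<not> \<theta> k \<le> \<theta> (Suc k)"
  then have lt: "\<theta> (Suc k) < \<theta> k" by simp
  \<comment> \<open>the constraints on the rate of user \<open>k + 1\<close> are among those on the rate of user \<open>k\<close>\<close>
  define t where "t = \<theta>(Suc k := \<theta> k)"
  have "t k' \<le> sic_margin c z i" if "k' \<in> {1..K}" "i \<in> {k'..K}" for k' i
    using that k theta_le_margin[of k' i] theta_le_margin[of k i] by (auto simp: t_def)
  then have "row_feasible K s c z t"
    using k sum_z z_pos theta_pos unfolding row_feasible_def t_def by auto
  then have "row_cost n K w \<theta> \<le> row_cost n K w t"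
    by (rule minimal)
  moreover have "inverse (\<theta> k ^ n) < inverse (\<theta> (Suc k) ^ n)"
    using lt theta_pos[of "Suc k"] k n_pos by (intro less_imp_inverse_less power_strict_mono) auto
  then have "row_cost n K w t < row_cost n K w \<theta>"
    using k w_pos[of "Suc k"] unfolding t_def by (simp add: row_cost_fun_upd mult_pos_neg)
  ultimately show False by simp
qed

lemma required_budget_eq: "required_budget c \<theta> K = s"
proof (rule ccontr)
  have gap: "required_budget c \<theta> K \<le> s"
    using required_budget_gap[of K c \<theta> z] c_pos theta_le_margin sum_z by auto
  assume "required_budget c \<theta> K \<noteq> s"
  with gap have lt: "required_budget c \<theta> K < s" by simp
  have T: "0 < required_budget c \<theta> K"
    using K_pos c_pos theta_pos by (rule required_budget_pos)
  define a where "a = s / required_budget c \<theta> K"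
  have a: "1 < a"
    using lt T by (simp add: a_def)
  have "row_cost n K w \<theta> \<le> row_cost n K w (\<lambda>i. a * \<theta> i)"
  proof (rule row_cost_le_of_budget)
    show "required_budget c (\<lambda>i. a * \<theta> i) K \<le> s"
      unfolding required_budget_scale using T by (simp add: a_def)
  qed (use a theta_pos theta_mono in auto)
  also have "row_cost n K w (\<lambda>i. a * \<theta> i) = inverse (a ^ n) * row_cost n K w \<theta>"
    unfolding row_cost_def by (simp add: sum_distrib_left power_mult_distrib mult_ac)
  also have "\<dots> < row_cost n K w \<theta>"
    using a n_pos row_cost_pos by (simp add: inverse_less_1_iff one_less_power)
  finally show False by simp
qed

lemma theta_eq_margin:
  assumes i: "i \<in> {1..K}"
  shows "\<theta> i = sic_margin c z i"
proof -
  have "c i * (sic_margin c z i - \<theta> i) \<le> 0"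
    using required_budget_gap[of K c \<theta> z] c_pos theta_le_margin sum_z required_budget_eq i by auto
  then show ?thesis
    using c_pos[OF i] theta_le_margin[OF i, of i] i by (simp add: mult_le_0_iff)
qed

lemma row_cost_le_block_shift:
  assumes jl: "1 \<le> j" "j < l" "l \<le> K" and block: "\<And>i. i \<in> {j..l} \<Longrightarrow> \<theta> i = t0"
    and h: "0 < h" "0 < t0 - budget_coeff c K l * h"
    and below: "1 < j \<Longrightarrow> \<theta> (j - 1) \<le> t0 - budget_coeff c K l * h"
    and above: "l < K \<Longrightarrow> t0 + budget_coeff c K j * h \<le> \<theta> (Suc l)"
  shows "row_cost n K w \<theta> \<le>
    row_cost n K w (\<theta>(j := t0 - budget_coeff c K l * h, l := t0 + budget_coeff c K j * h))"
    (is "_ \<le> row_cost n K w ?t")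
proof (rule row_cost_le_of_budget)
  let ?a = "budget_coeff c K"
  have "0 < ?a l" "0 < ?a j"
    using jl c_pos by (auto intro: budget_coeff_pos)
  then have shift: "0 < ?a l * h" "0 < ?a j * h"
    using h by simp_all
  show "0 < ?t i" if "i \<in> {1..K}" for i
    using that h shift theta_pos by simp
  show "required_budget c ?t K \<le> s"
    using jl block[of j] block[of l] required_budget_eq
    by (simp add: required_budget_fun_upd algebra_simps)
  show "?t i \<le> ?t (Suc i)" if i: "i \<in> {1..<K}" for i
  proof -
    consider "Suc i = j" | "i = j" | "i = l" | "Suc i = l" "i \<noteq> j"
      | "i \<noteq> j" "i \<noteq> l" "Suc i \<noteq> j" "Suc i \<noteq> l"
      by blast
    then show ?thesis
    proof cases
      case 1
      then show ?thesis using i jl below by auto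
    next
      case 2
      then show ?thesis using jl block[of "Suc i"] shift by auto
    next
      case 3
      then show ?thesis using i jl above by auto
    next
      case 4
      then show ?thesis using jl block[of i] shift by auto
    next
      case 5
      then show ?thesis using theta_mono[OF i] by simp
    qed
  qed
qed

lemma theta_strict_mono:
  assumes weight: "\<And>i. i \<in> {1..<K} \<Longrightarrow> w i * c (Suc i) < w (Suc i) * c i * (1 + c (Suc i))"
    and k: "k \<in> {1..<K}"
  shows "\<theta> k < \<theta> (Suc k)"
proof (rule ccontr)
  let ?a = "budget_coeff c K"
  assume "\<not> \<theta> k < \<theta> (Suc k)"
  then have "\<theta> (Suc k) = \<theta> k"
    using theta_mono[OF k] by simp
  then obtain j l where jl: "1 \<le> j" "j \<le> k" "Suc k \<le> l" "l \<le> K"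
    and block: "\<And>i. i \<in> {j..l} \<Longrightarrow> \<theta> i = \<theta> k"
    and below: "1 < j \<Longrightarrow> \<theta> (j - 1) < \<theta> k" and above: "l < K \<Longrightarrow> \<theta> k < \<theta> (Suc l)"
    using maximal_constant_block[of K \<theta> k] theta_mono k by blast
  \<comment> \<open>the rates just outside the block, or harmless bounds if the block reaches an end\<close>
  define lo where "lo = (if 1 < j then \<theta> (j - 1) else 0)"
  define hi where "hi = (if l < K then \<theta> (Suc l) else \<theta> k + 1)"
  have "0 < \<theta> (j - 1)" if "1 < j"
    using that jl k by (intro theta_pos) auto
  then have lo: "0 \<le> lo" "lo < \<theta> k"
    using below theta_pos[of k] k unfolding lo_def by (simp_all add: less_imp_le)
  have hi: "\<theta> k < hi"
    using above by (simp add: hi_def)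
  have ratio: "w j * ?a l < w l * ?a j"
    using jl by (intro weight_budget_ratio_less[of K c w, OF c_pos weight]) auto
  obtain h where h: "0 < h" "lo < \<theta> k - ?a l * h" "\<theta> k + ?a j * h < hi"
    and cheaper: "w j * inverse ((\<theta> k - ?a l * h) ^ n) + w l * inverse ((\<theta> k + ?a j * h) ^ n)
      < (w j + w l) * inverse (\<theta> k ^ n)"
    by (rule two_point_descent[OF n_pos lo hi ratio])
  have "row_cost n K w \<theta> \<le> row_cost n K w (\<theta>(j := \<theta> k - ?a l * h, l := \<theta> k + ?a j * h))"
  proof (rule row_cost_le_block_shift)
    show "0 < \<theta> k - ?a l * h"
      using h(2) lo(1) by simp
    show "\<theta> (j - 1) \<le> \<theta> k - ?a l * h" if "1 < j"
      using h(2) that by (simp add: lo_def)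
    show "\<theta> k + ?a j * h \<le> \<theta> (Suc l)" if "l < K"
      using h(3) that by (simp add: hi_def)
    show "\<theta> i = \<theta> k" if "i \<in> {j..l}" for i
      using that by (rule block)
  qed (use jl h(1) in auto)
  also have "\<dots> = row_cost n K w \<theta> + (w j * inverse ((\<theta> k - ?a l * h) ^ n)
      + w l * inverse ((\<theta> k + ?a j * h) ^ n) - (w j + w l) * inverse (\<theta> k ^ n))"
    using jl block[of j] block[of l] by (simp add: row_cost_fun_upd algebra_simps)
  finally show False
    using cheaper by simp
qed

lemma margin_ratio_strict_mono:
  assumes weight: "\<And>i. i \<in> {1..<K} \<Longrightarrow> w i * c (Suc i) < w (Suc i) * c i * (1 + c (Suc i))"
    and k: "k \<in> {1..<K}"
  shows "z k / c k < z (Suc k) / c (Suc k)"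
proof -
  have "z k / c k = \<theta> k + (\<Sum>l = 1..k - 1. z l)"
    using theta_eq_margin[of k] k by (simp add: sic_margin_def)
  also have "\<dots> < \<theta> (Suc k) + (\<Sum>l = 1..k. z l)"
    using theta_strict_mono[OF weight k] z_pos[of k] k
    by (cases k) (simp_all add: sum.cl_ivl_Suc)
  also have "\<dots> = z (Suc k) / c (Suc k)"
    using theta_eq_margin[of "Suc k"] k by (simp add: sic_margin_def)
  finally show ?thesis .
qed

end

section \<open>The full problem\<close>

lemma feasible_iff_row_feasible:
  "feasible M K R zeta theta \<longleftrightarrow>
    (\<forall>m \<in> {1..M}. row_feasible K (1 / real M) (\<lambda>i. 2 powr R m i - 1) (zeta m) (theta m))"
  unfolding feasible_def row_feasible_def sic_margin_def by blast

lemma objective_eq_sum_row_cost: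
  "objective n M K phi R theta = (\<Sum>m = 1..M. row_cost n K (\<lambda>k. phi m k * R m k) (theta m))"
  unfolding objective_def row_cost_def by simp

lemma row_optimum_of_optimal:
  assumes opt: "optimal n M K phi R zeta theta" and m: "m \<in> {1..M}"
    and n: "1 \<le> n" and K: "1 \<le> K"
    and R_pos: "\<And>k. k \<in> {1..K} \<Longrightarrow> 0 < R m k" and phi_pos: "\<And>k. k \<in> {1..K} \<Longrightarrow> 0 < phi m k"
  shows "row_optimum n K (1 / real M) (\<lambda>i. 2 powr R m i - 1) (\<lambda>k. phi m k * R m k) (zeta m) (theta m)"
proof
  have feas: "feasible M K R zeta theta"
    using opt unfolding optimal_def by blast
  then show "row_feasible K (1 / real M) (\<lambda>i. 2 powr R m i - 1) (zeta m) (theta m)"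
    using m unfolding feasible_iff_row_feasible by blast
  fix z t
  assume row: "row_feasible K (1 / real M) (\<lambda>i. 2 powr R m i - 1) z t"
  have "feasible M K R (zeta(m := z)) (theta(m := t))"
    using feas row unfolding feasible_iff_row_feasible by simp
  then have "objective n M K phi R theta \<le> objective n M K phi R (theta(m := t))"
    using opt unfolding optimal_def by blast
  then show "row_cost n K (\<lambda>k. phi m k * R m k) (theta m) \<le> row_cost n K (\<lambda>k. phi m k * R m k) t"
    using m sum_fun_upd_diff[of "{1..M}" m "\<lambda>m' th. row_cost n K (\<lambda>k. phi m' k * R m' k) th" theta t]
    unfolding objective_eq_sum_row_cost by simp
qed (use n K R_pos phi_pos in auto)

lemma phi_const_eq_scaled:
  assumes "M \<le> Nr" "0 < gam" "0 < Kc" "0 < d"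
  shows "phi_const Nr M lam detRr q gam Kc alpha d =
    phi_const Nr M lam detRr q gam Kc alpha 1 * (d powr alpha) ^ (Nr - M + 1)"
proof -
  define A where "A = (if M = 1 then 1 / (fact Nr * detRr)
    else (-1) ^ (Nr - M) * fact (Nr - 1) * det (D_mat Nr M lam)
      / (fact (Nr - M) * fact (Nr - M + 1) * fact (M - 2) * det (W_mat Nr lam)))"
  have phi: "phi_const Nr M lam detRr q gam Kc alpha x = A * (q / (gam * Kc * x powr (- alpha))) ^ (Nr - M + 1)"
    for x
    using assms(1) unfolding phi_const_def Let_def A_def by (cases "M = 1") auto
  have "q / (gam * Kc * d powr (- alpha)) = q / (gam * Kc * 1 powr (- alpha)) * d powr alpha"
    using assms by (simp add: powr_minus field_simps)
  then show ?thesis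
    unfolding phi by (simp only: power_mult_distrib mult.assoc)
qed

lemma phi_const_mono:
  assumes "M \<le> Nr" "0 < gam" "0 < Kc" "0 < alpha" "0 < d1" "d1 \<le> d2"
    and pos: "0 < phi_const Nr M lam detRr q gam Kc alpha d1"
  shows "phi_const Nr M lam detRr q gam Kc alpha d1 \<le> phi_const Nr M lam detRr q gam Kc alpha d2"
proof -
  let ?P = "phi_const Nr M lam detRr q gam Kc alpha 1"
  have eq: "phi_const Nr M lam detRr q gam Kc alpha d = ?P * (d powr alpha) ^ (Nr - M + 1)" if "0 < d" for d
    using assms that by (intro phi_const_eq_scaled) auto
  have "0 < ?P * (d1 powr alpha) ^ (Nr - M + 1)"
    using pos unfolding eq[OF assms(5)] .
  then have "0 < ?P"
    by (rule zero_less_mult_pos2) (use assms(5) in simp)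
  moreover have "(d1 powr alpha) ^ (Nr - M + 1) \<le> (d2 powr alpha) ^ (Nr - M + 1)"
    using assms by (intro power_mono powr_mono2) auto
  ultimately show ?thesis
    using eq[of d1] eq[of d2] assms by simp
qed

theorem mainTheorem2:
  fixes Nt Nr M K m :: nat
    and Rt Rr V :: "complex mat"
    and lam :: "nat \<Rightarrow> real"
    and gam Kc alpha :: real
    and d :: "nat \<Rightarrow> real"
    and R zeta theta :: "nat \<Rightarrow> nat \<Rightarrow> real"
    and phi :: "nat \<Rightarrow> nat \<Rightarrow> real"
  assumes M_pos: "1 \<le> M" and M_le: "M \<le> Nt" "M \<le> Nr" and K_pos: "1 \<le> K"
    and Rt: "hpd_mat Rt Nt" and Rr: "hpd_mat Rr Nr"
    and eig: "char_poly Rr = (\<Prod>i = 1..Nr. [:- complex_of_real (lam i), 1:])"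
    and V: "V \<in> carrier_mat Nt M" "\<forall>j < M. col V j \<bullet>c col V j = 1"
    and Rtp_inv: "invertible_mat (mat_adjoint V * Rt * V)"
    and gam: "gam > 0" and Kc: "Kc > 0" and alpha: "alpha > 0"
    and d_pos: "\<forall>k \<in> {1..K}. d k > 0"
    and d_mono: "\<forall>k \<in> {1..<K}. d k \<le> d (k + 1)"
    and phi_def: "\<forall>m' \<in> {1..M}. \<forall>k \<in> {1..K}. phi m' k =
        phi_const Nr M lam (Re (det Rr))
          (Re (mat_inv (mat_adjoint V * Rt * V) $$ (m' - 1, m' - 1))) gam Kc alpha (d k)"
    and phi_pos: "\<forall>m' \<in> {1..M}. \<forall>k \<in> {1..K}. phi m' k > 0"
    and R_pos: "\<forall>m' \<in> {1..M}. \<forall>k \<in> {1..K}. R m' k > 0"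
    and opt: "optimal (Nr - M + 1) M K phi R zeta theta"
    and m: "m \<in> {1..M}"
  shows "(\<forall>k \<in> {1..<K}. theta m k < theta m (k + 1)) \<and>
         (\<forall>k \<in> {1..<K}. zeta m k / (2 powr R m k - 1) < zeta m (k + 1) / (2 powr R m (k + 1) - 1))"
proof -
  define c where "c i = 2 powr R m i - 1" for i
  define w where "w k = phi m k * R m k" for k
  interpret row_optimum "Nr - M + 1" K "1 / real M" c w "zeta m" "theta m"
    unfolding c_def w_def using opt m K_pos R_pos phi_pos by (intro row_optimum_of_optimal) auto
  have weight: "w i * c (Suc i) < w (Suc i) * c i * (1 + c (Suc i))" if i: "i \<in> {1..<K}" for i
  proof -
    have "phi m i \<le> phi m (Suc i)"
      using phi_const_mono[OF M_le(2) gam Kc alpha, of "d i" "d (Suc i)"] phi_def phi_pos d_pos d_mono m i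
      by auto
    then show ?thesis
      unfolding w_def c_def using i m phi_pos R_pos by (intro weight_step_less) auto
  qed
  show ?thesis
    using theta_strict_mono[OF weight] margin_ratio_strict_mono[OF weight] by (simp add: c_def)
qed

end
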